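(* The pair of graded graphs $(\mathbf{Comp}_\bullet,\mathbf{U},\mathbf{V})$ is $2$-dual, that is $\mathbf{V}^\star\mathbf{U}-\mathbf{U}\mathbf{V}^\star=2I$, where $I$ is the identity map.
   Context: $\mathbb{K}$ is a field of characteristic zero. $\mathbf{Comp}$ is the set of all nonempty words over $\{0,1\}$ beginning with $0$ (the elements of the operad of integer compositions), graded by rank $|u|-1$; $\mathbf{Comp}_\bullet$ denotes this graded set. The prefix graph and twisted prefix graph of this operad are given by the linear maps on $\mathbb{K}\langle\mathbf{Comp}\rangle$ (basis: these words) $$\mathbf{U}(u)=\sum_{i\in[|u|]}\big(u_1\cdots u_i\,0\,u_{i+1}\cdots u_{|u|}+u_1\cdots u_i\,1\,u_{i+1}\cdots u_{|u|}\big),\qquad \mathbf{V}(u)=u0+u1.$$ $\mathbf{V}^\star$ is the adjoint of $\mathbf{V}$ for the scalar product making the words orthonormal. *)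

theory Defs
  imports Main
begin

text \<open>Words over {0,1} are bool lists, with False = 0 and True = 1.
  Elements of K<Comp> are finitely supported functions from words to K supported on Comp.\<close>

definition Comp :: "bool list set" where
  "Comp = {u. u \<noteq> [] \<and> hd u = False}"

definition bvec :: "bool list \<Rightarrow> bool list \<Rightarrow> 'a::field" where
  "bvec u = (\<lambda>w. if w = u then 1 else 0)"

definition supp_v :: "(bool list \<Rightarrow> 'a::field) \<Rightarrow> bool list set" where
  "supp_v x = {w. x w \<noteq> 0}"

definition in_KComp :: "(bool list \<Rightarrow> 'a::field) \<Rightarrow> bool" where
  "in_KComp x \<longleftrightarrow> finite (supp_v x) \<and> supp_v x \<subseteq> Comp"

definition lin_ext :: "(bool list \<Rightarrow> bool list \<Rightarrow> 'a::field) \<Rightarrow> (bool list \<Rightarrow> 'a) \<Rightarrow> bool list \<Rightarrow> 'a" where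
  "lin_ext f x = (\<lambda>w. \<Sum>u\<in>supp_v x. x u * f u w)"

definition scal :: "(bool list \<Rightarrow> 'a::field) \<Rightarrow> (bool list \<Rightarrow> 'a) \<Rightarrow> 'a" where
  "scal x y = (\<Sum>w\<in>supp_v x \<inter> supp_v y. x w * y w)"

definition ins :: "bool list \<Rightarrow> nat \<Rightarrow> bool \<Rightarrow> bool list" where
  "ins u i b = take i u @ b # drop i u"

definition U_basis :: "bool list \<Rightarrow> bool list \<Rightarrow> 'a::field" where
  "U_basis u = (\<lambda>w. \<Sum>i\<in>{1..length u}. bvec (ins u i False) w + bvec (ins u i True) w)"

definition V_basis :: "bool list \<Rightarrow> bool list \<Rightarrow> 'a::field" where
  "V_basis u = (\<lambda>w. bvec (u @ [False]) w + bvec (u @ [True]) w)"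

definition Vstar_basis :: "bool list \<Rightarrow> bool list \<Rightarrow> 'a::field" where
  "Vstar_basis u = (\<lambda>w. if w \<in> Comp then scal (bvec u) (V_basis w) else 0)"

definition U_op :: "(bool list \<Rightarrow> 'a::field) \<Rightarrow> bool list \<Rightarrow> 'a" where
  "U_op = lin_ext U_basis"

definition V_op :: "(bool list \<Rightarrow> 'a::field) \<Rightarrow> bool list \<Rightarrow> 'a" where
  "V_op = lin_ext V_basis"

definition Vstar_op :: "(bool list \<Rightarrow> 'a::field) \<Rightarrow> bool list \<Rightarrow> 'a" where
  "Vstar_op = lin_ext Vstar_basis"

end

theory Submission
  imports Defs
begin

text \<open>On a basis word, \<open>V\<^sup>\<star>\<close> deletes the last letter (giving 0 when the word has length 1,
  since the empty word is not a composition), while \<open>U\<close> inserts a letter after each of the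
  positions \<open>1, \<dots>, |u|\<close>. In \<open>V\<^sup>\<star>U u\<close> the two insertions after the last position are
  undone and contribute \<open>2u\<close>; every other insertion commutes with deleting the last letter,
  so the remaining terms are exactly \<open>U V\<^sup>\<star> u = U(butlast u)\<close>.\<close>

lemma supp_v_bvec: "supp_v (bvec u :: _ \<Rightarrow> 'a::field) = {u}"
  by (auto simp: supp_v_def bvec_def)

lemma supp_v_zero: "supp_v (\<lambda>_. 0 :: 'a::field) = {}"
  by (simp add: supp_v_def)

lemma supp_v_add_subset: "supp_v (\<lambda>w. x w + y w) \<subseteq> supp_v x \<union> supp_v y"
  by (auto simp: supp_v_def)

lemma supp_v_sum_subset: "supp_v (\<lambda>w. \<Sum>i\<in>I. y i w) \<subseteq> (\<Union>i\<in>I. supp_v (y i))"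
  by (auto simp: supp_v_def intro: ccontr sum.neutral)

lemma lin_ext_superset:
  assumes "finite S" "supp_v x \<subseteq> S"
  shows "lin_ext g x w = (\<Sum>u\<in>S. x u * g u w)"
  unfolding lin_ext_def
  by (rule sum.mono_neutral_left) (use assms in \<open>auto simp: supp_v_def\<close>)

lemma lin_ext_bvec: "lin_ext g (bvec v) = g v"
  unfolding lin_ext_def supp_v_bvec by (simp add: bvec_def)

lemma lin_ext_zero: "lin_ext g (\<lambda>_. 0) = (\<lambda>_. 0)"
  by (simp add: fun_eq_iff lin_ext_def supp_v_zero)

lemma lin_ext_bvec_id: "finite (supp_v x) \<Longrightarrow> lin_ext bvec x = x"
  by (auto simp: fun_eq_iff lin_ext_def bvec_def supp_v_def if_distrib cong: if_cong)

lemma lin_ext_add: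
  assumes "finite (supp_v x)" "finite (supp_v y)"
  shows "lin_ext g (\<lambda>w. x w + y w) w' = lin_ext g x w' + lin_ext g y w'"
proof -
  let ?S = "supp_v x \<union> supp_v y"
  have "finite ?S" using assms by simp
  then show ?thesis
    using supp_v_add_subset[of x y]
    by (simp add: lin_ext_superset[of ?S] distrib_right sum.distrib)
qed

lemma lin_ext_sum:
  assumes "finite I" "\<And>i. i \<in> I \<Longrightarrow> finite (supp_v (y i))"
  shows "lin_ext g (\<lambda>w. \<Sum>i\<in>I. y i w) w' = (\<Sum>i\<in>I. lin_ext g (y i) w')"
proof -
  let ?S = "\<Union>i\<in>I. supp_v (y i)"
  have S: "finite ?S" using assms by simp
  have supp: "supp_v (y i) \<subseteq> ?S" if "i \<in> I" for i
    using that by auto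
  have "lin_ext g (\<lambda>w. \<Sum>i\<in>I. y i w) w' = (\<Sum>u\<in>?S. \<Sum>i\<in>I. y i u * g u w')"
    by (simp add: lin_ext_superset[OF S supp_v_sum_subset] sum_distrib_right)
  also have "\<dots> = (\<Sum>i\<in>I. lin_ext g (y i) w')"
    by (subst sum.swap) (simp add: lin_ext_superset[OF S supp])
  finally show ?thesis .
qed

lemma lin_ext_lin_ext:
  assumes "finite (supp_v x)" "\<And>u. finite (supp_v (f u))"
  shows "lin_ext g (lin_ext f x) = lin_ext (\<lambda>u. lin_ext g (f u)) x"
proof
  fix w
  let ?T = "\<Union>u\<in>supp_v x. supp_v (f u)"
  have T: "finite ?T" using assms by simp
  have supp: "supp_v (f u) \<subseteq> ?T" if "u \<in> supp_v x" for u
    using that by auto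
  have "supp_v (lin_ext f x) \<subseteq> ?T"
    unfolding lin_ext_def by (rule order_trans[OF supp_v_sum_subset]) (auto simp: supp_v_def)
  then have "lin_ext g (lin_ext f x) w = (\<Sum>v\<in>?T. lin_ext f x v * g v w)"
    by (rule lin_ext_superset[OF T])
  also have "\<dots> = (\<Sum>v\<in>?T. \<Sum>u\<in>supp_v x. x u * f u v * g v w)"
    by (simp add: lin_ext_def sum_distrib_right)
  also have "\<dots> = (\<Sum>u\<in>supp_v x. x u * lin_ext g (f u) w)"
    by (subst sum.swap) (simp add: lin_ext_superset[OF T supp] sum_distrib_left mult.assoc)
  finally show "lin_ext g (lin_ext f x) w = lin_ext (\<lambda>u. lin_ext g (f u)) x w"
    by (simp add: lin_ext_def)
qed

lemma finite_supp_U_basis: "finite (supp_v (U_basis u :: _ \<Rightarrow> 'a::field))"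
  unfolding U_basis_def
  by (rule finite_subset[OF supp_v_sum_subset])
     (auto intro: finite_subset[OF supp_v_add_subset] simp: supp_v_bvec)

lemma lin_ext_U_basis:
  "lin_ext g (U_basis u) w = (\<Sum>i\<in>{1..length u}. g (ins u i False) w + g (ins u i True) w)"
  unfolding U_basis_def
  by (simp add: lin_ext_sum lin_ext_add lin_ext_bvec supp_v_bvec
      finite_subset[OF supp_v_add_subset])

lemma Vstar_basis_eq:
  "Vstar_basis v = (if v \<noteq> [] \<and> butlast v \<in> Comp then bvec (butlast v) else (\<lambda>_. 0::'a::field))"
proof
  fix w
  have "supp_v (bvec v :: _ \<Rightarrow> 'a) \<inter> supp_v (V_basis w :: _ \<Rightarrow> 'a)
      = (if v = w @ [False] \<or> v = w @ [True] then {v} else {})"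
    by (auto simp: supp_v_def bvec_def V_basis_def)
  then have "scal (bvec v) (V_basis w :: _ \<Rightarrow> 'a) = (if v = w @ [False] \<or> v = w @ [True] then 1 else 0)"
    by (auto simp: scal_def bvec_def V_basis_def)
  moreover have "(v = w @ [False] \<or> v = w @ [True]) \<longleftrightarrow> (v \<noteq> [] \<and> w = butlast v)"
    by (metis (full_types) append_butlast_last_id butlast_snoc snoc_eq_iff_butlast)
  ultimately show "Vstar_basis v w = (if v \<noteq> [] \<and> butlast v \<in> Comp then bvec (butlast v) else (\<lambda>_. 0::'a)) w"
    by (auto simp: Vstar_basis_def bvec_def)
qed

lemma finite_supp_Vstar_basis: "finite (supp_v (Vstar_basis v :: _ \<Rightarrow> 'a::field))"
  by (cases "v \<noteq> [] \<and> butlast v \<in> Comp") (simp_all add: Vstar_basis_eq supp_v_bvec supp_v_zero)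

lemma butlast_ins: "i < length u \<Longrightarrow> butlast (ins u i b) = ins (butlast u) i b"
  by (simp add: ins_def butlast_append take_butlast butlast_drop)

lemma butlast_ins_length: "butlast (ins u (length u) b) = u"
  by (simp add: ins_def)

lemma butlast_ins_in_Comp: "u \<in> Comp \<Longrightarrow> 1 \<le> i \<Longrightarrow> butlast (ins u i b) \<in> Comp"
  by (cases u; cases i) (auto simp: Comp_def ins_def butlast_append)

lemma Vstar_U_basis:
  assumes "u \<in> Comp"
  shows "lin_ext Vstar_basis (U_basis u) w = 2 * bvec u w + (U_basis (butlast u) w :: 'a::field)"
proof -
  define n where "n = length u"
  have n_pos: "n \<ge> 1" using assms by (cases u) (auto simp: n_def Comp_def)
  then have n: "{1..n} = insert n {1..n - 1}" by auto
  have ins_nonempty: "ins u i b \<noteq> []" for i b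
    by (simp add: ins_def)
  have "lin_ext Vstar_basis (U_basis u) w
      = (\<Sum>i\<in>{1..n}. bvec (butlast (ins u i False)) w + (bvec (butlast (ins u i True)) w :: 'a))"
    unfolding lin_ext_U_basis n_def
    by (rule sum.cong) (simp_all add: Vstar_basis_eq butlast_ins_in_Comp[OF assms] ins_nonempty)
  also have "\<dots> = 2 * bvec u w
      + (\<Sum>i\<in>{1..n - 1}. bvec (ins (butlast u) i False) w + bvec (ins (butlast u) i True) w)"
  proof -
    have "butlast (ins u i b) = ins (butlast u) i b" if "i \<in> {1..n - 1}" for i b
      using that n_pos by (auto simp: n_def intro!: butlast_ins)
    then show ?thesis
      unfolding n using n_pos by (simp add: n_def butlast_ins_length)
  qed
  also have "\<dots> = 2 * bvec u w + U_basis (butlast u) w"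
    by (simp add: U_basis_def n_def)
  finally show ?thesis .
qed

lemma U_Vstar_basis:
  assumes "u \<in> Comp"
  shows "lin_ext U_basis (Vstar_basis u) w = (U_basis (butlast u) w :: 'a::field)"
proof (cases "butlast u \<in> Comp")
  case True
  then show ?thesis using assms by (simp add: Vstar_basis_eq Comp_def lin_ext_bvec)
next
  case False
  with assms have "butlast u = []" by (cases u) (auto simp: Comp_def split: if_splits)
  with False show ?thesis by (simp add: Vstar_basis_eq lin_ext_zero U_basis_def)
qed

lemma Vstar_U_commutator_basis:
  "u \<in> Comp \<Longrightarrow> lin_ext Vstar_basis (U_basis u) w - lin_ext U_basis (Vstar_basis u) w
    = 2 * (bvec u w :: 'a::field)"
  by (simp add: Vstar_U_basis U_Vstar_basis)

theorem proposition4p8: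
  fixes x :: "bool list \<Rightarrow> 'a::field_char_0"
  assumes "in_KComp x"
  shows "(\<lambda>w. Vstar_op (U_op x) w - U_op (Vstar_op x) w) = (\<lambda>w. 2 * x w)"
proof
  fix w
  have fin: "finite (supp_v x)" and Comp: "supp_v x \<subseteq> Comp"
    using assms by (auto simp: in_KComp_def)
  have "Vstar_op (U_op x) = lin_ext (\<lambda>u. lin_ext Vstar_basis (U_basis u)) x"
    and "U_op (Vstar_op x) = lin_ext (\<lambda>u. lin_ext U_basis (Vstar_basis u)) x"
    by (simp_all add: Vstar_op_def U_op_def lin_ext_lin_ext fin finite_supp_U_basis finite_supp_Vstar_basis)
  then have "Vstar_op (U_op x) w - U_op (Vstar_op x) w
      = (\<Sum>u\<in>supp_v x. x u * (lin_ext Vstar_basis (U_basis u) w - lin_ext U_basis (Vstar_basis u) w))"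
    by (simp add: lin_ext_def right_diff_distrib sum_subtractf)
  also have "\<dots> = (\<Sum>u\<in>supp_v x. 2 * (x u * bvec u w))"
    using Comp by (auto intro!: sum.cong simp: Vstar_U_commutator_basis)
  also have "\<dots> = 2 * lin_ext bvec x w"
    by (simp add: lin_ext_def sum_distrib_left)
  finally show "Vstar_op (U_op x) w - U_op (Vstar_op x) w = 2 * x w"
    by (simp add: lin_ext_bvec_id fin)
qed

end
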